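(* Every generic Euclidean triangle is typical.
   Context: A Euclidean triangle with edge lengths $\ell_1,\ell_2,\ell_3$ and interior angles $\alpha_1,\alpha_2,\alpha_3$ is generic if for some real $k>0$ the numbers $k\ell_1,k\ell_2,k\ell_3$ are algebraically independent over $\mathbb{Q}$; it is typical if $\alpha_1,\alpha_2,\alpha_3$ are linearly independent over $\mathbb{Q}$. *)

theory Defs
  imports "HOL-Analysis.Analysis"
begin

definition vertex_angle :: "real^2 \<Rightarrow> real^2 \<Rightarrow> real^2 \<Rightarrow> real" where
  "vertex_angle P Q R = arccos (((Q - P) \<bullet> (R - P)) / (norm (Q - P) * norm (R - P)))"

definition alg_indep3 :: "real \<Rightarrow> real \<Rightarrow> real \<Rightarrow> bool" where
  "alg_indep3 x y z \<longleftrightarrow>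
     (\<forall>(n::nat) (c::nat \<Rightarrow> nat \<Rightarrow> nat \<Rightarrow> rat).
        (\<Sum>i\<le>n. \<Sum>j\<le>n. \<Sum>k\<le>n. of_rat (c i j k) * x ^ i * y ^ j * z ^ k) = 0
        \<longrightarrow> (\<forall>i\<le>n. \<forall>j\<le>n. \<forall>k\<le>n. c i j k = 0))"

definition lin_indep3_Q :: "real \<Rightarrow> real \<Rightarrow> real \<Rightarrow> bool" where
  "lin_indep3_Q x y z \<longleftrightarrow>
     (\<forall>a b c :: rat. of_rat a * x + of_rat b * y + of_rat c * z = 0 \<longrightarrow> a = 0 \<and> b = 0 \<and> c = 0)"

text \<open>Triangle with vertices A1 A2 A3; edge length l_i is opposite vertex A_i.\<close>
definition generic_triangle :: "real^2 \<Rightarrow> real^2 \<Rightarrow> real^2 \<Rightarrow> bool" where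
  "generic_triangle A1 A2 A3 \<longleftrightarrow>
     (\<exists>k>0. alg_indep3 (k * dist A2 A3) (k * dist A1 A3) (k * dist A1 A2))"

definition typical_triangle :: "real^2 \<Rightarrow> real^2 \<Rightarrow> real^2 \<Rightarrow> bool" where
  "typical_triangle A1 A2 A3 \<longleftrightarrow>
     lin_indep3_Q (vertex_angle A1 A2 A3) (vertex_angle A2 A1 A3) (vertex_angle A3 A1 A2)"

end

theory Submission
  imports Defs
begin

text \<open>Suppose \<open>n\<^sub>1 \<alpha>\<^sub>1 + n\<^sub>2 \<alpha>\<^sub>2 + n\<^sub>3 \<alpha>\<^sub>3 = 0\<close> with integers \<open>n\<^sub>i\<close>. By the law of cosines,
  \<open>2yz cis(\<plusminus>\<alpha>) = (y^2 + z^2 - x^2) \<plusminus> i sqrt H\<close> for the angle \<open>\<alpha>\<close> opposite the side \<open>x\<close>,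
  where \<open>H\<close> is sixteen times the squared area. Multiplying out,
  \<open>w cis(n\<^sub>1 \<alpha>\<^sub>1 + n\<^sub>2 \<alpha>\<^sub>2 + n\<^sub>3 \<alpha>\<^sub>3) = P + i sqrt H Q\<close> for a positive monomial weight \<open>w\<close> and
  polynomials \<open>P\<close>, \<open>Q\<close> with rational coefficients in the side lengths, so the relation says
  \<open>P - w = Q = 0\<close> at the rescaled side lengths. Algebraic independence turns these into
  polynomial identities, hence \<open>cis(n\<^sub>1 \<alpha>\<^sub>1 + n\<^sub>2 \<alpha>\<^sub>2 + n\<^sub>3 \<alpha>\<^sub>3) = 1\<close> for every triangle. On the
  isosceles triangles with angles \<open>\<pi> - 2t, t, t\<close> this forces \<open>n\<^sub>2 + n\<^sub>3 = 2 n\<^sub>1\<close>; by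
  symmetry all \<open>n\<^sub>i\<close> are equal, and since the angles are positive they vanish.\<close>

definition monomial3 :: "nat \<times> nat \<times> nat \<Rightarrow> real \<Rightarrow> real \<Rightarrow> real \<Rightarrow> real" where
  "monomial3 m x y z = x ^ fst m * y ^ fst (snd m) * z ^ snd (snd m)"

definition rat_poly3 :: "(real \<Rightarrow> real \<Rightarrow> real \<Rightarrow> real) \<Rightarrow> bool" where
  "rat_poly3 f \<longleftrightarrow>
     (\<exists>M c. finite M \<and> (\<forall>x y z. f x y z = (\<Sum>m\<in>M. of_rat (c m) * monomial3 m x y z)))"

lemma monomial3_mult:
  "monomial3 a x y z * monomial3 b x y z =
     monomial3 (fst a + fst b, fst (snd a) + fst (snd b), snd (snd a) + snd (snd b)) x y z"
  unfolding monomial3_def by (simp add: power_add algebra_simps)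

lemma sum_monomial3_extend:
  assumes "finite N" "M \<subseteq> N"
  shows "(\<Sum>m\<in>M. of_rat (c m) * monomial3 m x y z) =
    (\<Sum>m\<in>N. of_rat (if m \<in> M then c m else 0) * monomial3 m x y z)"
  by (rule sum.mono_neutral_cong_left) (use assms in auto)

lemma rat_poly3_monomial: "rat_poly3 (\<lambda>x y z. of_rat q * monomial3 m x y z)"
  unfolding rat_poly3_def by (intro exI[of _ "{m}"] exI[of _ "\<lambda>_. q"]) simp

lemma rat_poly3_add:
  assumes "rat_poly3 f" "rat_poly3 g"
  shows "rat_poly3 (\<lambda>x y z. f x y z + g x y z)"
proof -
  obtain M1 c1 where M1: "finite M1" "\<And>x y z. f x y z = (\<Sum>m\<in>M1. of_rat (c1 m) * monomial3 m x y z)"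
    using assms(1) unfolding rat_poly3_def by blast
  obtain M2 c2 where M2: "finite M2" "\<And>x y z. g x y z = (\<Sum>m\<in>M2. of_rat (c2 m) * monomial3 m x y z)"
    using assms(2) unfolding rat_poly3_def by blast
  let ?c = "\<lambda>m. (if m \<in> M1 then c1 m else 0) + (if m \<in> M2 then c2 m else 0)"
  have "f x y z + g x y z = (\<Sum>m\<in>M1 \<union> M2. of_rat (?c m) * monomial3 m x y z)" for x y z
  proof -
    have "f x y z + g x y z =
        (\<Sum>m\<in>M1 \<union> M2. of_rat (if m \<in> M1 then c1 m else 0) * monomial3 m x y z)
      + (\<Sum>m\<in>M1 \<union> M2. of_rat (if m \<in> M2 then c2 m else 0) * monomial3 m x y z)"
      unfolding M1(2) M2(2) using M1(1) M2(1)
      by (intro arg_cong2[where f = "(+)"] sum_monomial3_extend) auto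
    then show ?thesis
      by (simp only: of_rat_add distrib_right sum.distrib)
  qed
  then show ?thesis
    unfolding rat_poly3_def using M1(1) M2(1) by (intro exI[of _ "M1 \<union> M2"] exI[of _ ?c]) simp
qed

lemma rat_poly3_sum:
  assumes "finite A" "\<And>a. a \<in> A \<Longrightarrow> rat_poly3 (f a)"
  shows "rat_poly3 (\<lambda>x y z. \<Sum>a\<in>A. f a x y z)"
  using assms
proof (induction A rule: finite_induct)
  case empty
  show ?case unfolding rat_poly3_def by (intro exI[of _ "{}"]) simp
next
  case (insert a A)
  then show ?case by (simp add: rat_poly3_add)
qed

lemma rat_poly3_mult:
  assumes "rat_poly3 f" "rat_poly3 g"
  shows "rat_poly3 (\<lambda>x y z. f x y z * g x y z)"
proof -
  obtain M1 c1 where M1: "finite M1" "\<And>x y z. f x y z = (\<Sum>m\<in>M1. of_rat (c1 m) * monomial3 m x y z)"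
    using assms(1) unfolding rat_poly3_def by blast
  obtain M2 c2 where M2: "finite M2" "\<And>x y z. g x y z = (\<Sum>m\<in>M2. of_rat (c2 m) * monomial3 m x y z)"
    using assms(2) unfolding rat_poly3_def by blast
  have "f x y z * g x y z = (\<Sum>a\<in>M1. \<Sum>b\<in>M2.
      of_rat (c1 a * c2 b) * (monomial3 a x y z * monomial3 b x y z))" for x y z
    by (simp add: M1(2) M2(2) sum_product of_rat_mult algebra_simps)
  moreover have "rat_poly3 (\<lambda>x y z. \<Sum>a\<in>M1. \<Sum>b\<in>M2.
      of_rat (c1 a * c2 b) * (monomial3 a x y z * monomial3 b x y z))"
    unfolding monomial3_mult using M1(1) M2(1) by (intro rat_poly3_sum rat_poly3_monomial)
  ultimately show ?thesis by simp
qed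

lemma rat_poly3_const: "c \<in> \<rat> \<Longrightarrow> rat_poly3 (\<lambda>x y z. c)"
  using rat_poly3_monomial[of _ "(0, 0, 0)"] by (auto elim!: Rats_cases simp: monomial3_def)

lemma rat_poly3_var1: "rat_poly3 (\<lambda>x y z. x)"
  and rat_poly3_var2: "rat_poly3 (\<lambda>x y z. y)"
  and rat_poly3_var3: "rat_poly3 (\<lambda>x y z. z)"
  using rat_poly3_monomial[of 1 "(1, 0, 0)"] rat_poly3_monomial[of 1 "(0, 1, 0)"]
    rat_poly3_monomial[of 1 "(0, 0, 1)"]
  by (simp_all add: monomial3_def)

lemma rat_poly3_minus: "rat_poly3 f \<Longrightarrow> rat_poly3 (\<lambda>x y z. - f x y z)"
  using rat_poly3_mult[OF rat_poly3_const[of "-1"]] by simp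

lemma rat_poly3_diff:
  assumes "rat_poly3 f" "rat_poly3 g"
  shows "rat_poly3 (\<lambda>x y z. f x y z - g x y z)"
  using rat_poly3_add[OF assms(1) rat_poly3_minus[OF assms(2)]] by simp

lemma rat_poly3_power: "rat_poly3 f \<Longrightarrow> rat_poly3 (\<lambda>x y z. f x y z ^ n)"
  by (induction n) (simp_all add: rat_poly3_const rat_poly3_mult)

lemmas rat_poly3_intros = rat_poly3_const rat_poly3_var1 rat_poly3_var2 rat_poly3_var3
  rat_poly3_add rat_poly3_minus rat_poly3_diff rat_poly3_mult rat_poly3_power

lemma alg_indep3_rat_poly3_vanishes:
  assumes indep: "alg_indep3 a b c" and "rat_poly3 f" and root: "f a b c = 0"
  shows "f x y z = 0"
proof -
  obtain M cf where M: "finite M" "\<And>x y z. f x y z = (\<Sum>m\<in>M. of_rat (cf m) * monomial3 m x y z)"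
    using \<open>rat_poly3 f\<close> unfolding rat_poly3_def by blast
  define n where "n = Max ((\<lambda>m. fst m + fst (snd m) + snd (snd m)) ` M \<union> {0})"
  define B where "B = {..n} \<times> {..n} \<times> {..n}"
  have "fst m + fst (snd m) + snd (snd m) \<le> n" if "m \<in> M" for m
    unfolding n_def using that M(1) by (intro Max_ge) auto
  then have "M \<subseteq> B" unfolding B_def by force
  define C where "C i j k = (if (i, j, k) \<in> M then cf (i, j, k) else 0)" for i j k
  have C: "C (fst m) (fst (snd m)) (snd (snd m)) = (if m \<in> M then cf m else 0)" for m
    by (simp add: C_def)
  have box: "f u v w = (\<Sum>i\<le>n. \<Sum>j\<le>n. \<Sum>k\<le>n. of_rat (C i j k) * u ^ i * v ^ j * w ^ k)" for u v w
    unfolding M(2) sum_monomial3_extend[OF _ \<open>M \<subseteq> B\<close>, unfolded B_def, simplified]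
    by (simp add: sum.cartesian_product monomial3_def case_prod_beta mult.assoc C)
  have "\<forall>i\<le>n. \<forall>j\<le>n. \<forall>k\<le>n. C i j k = 0"
    using indep root unfolding alg_indep3_def box by blast
  then have "cf m = 0" if "m \<in> M" for m
    using that \<open>M \<subseteq> B\<close> unfolding B_def C_def by (cases m) force
  then show ?thesis using M(2) by simp
qed

text \<open>Sixteen times the squared area of a triangle with sides \<open>x, y, z\<close> (Heron's formula).\<close>

definition heron :: "real \<Rightarrow> real \<Rightarrow> real \<Rightarrow> real" where
  "heron x y z = 2*x^2*y^2 + 2*y^2*z^2 + 2*z^2*x^2 - x^4 - y^4 - z^4"

definition opp_angle :: "real \<Rightarrow> real \<Rightarrow> real \<Rightarrow> real" where
  "opp_angle x y z = arccos ((y^2 + z^2 - x^2) / (2*y*z))"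

definition nondegenerate_sides :: "real \<Rightarrow> real \<Rightarrow> real \<Rightarrow> bool" where
  "nondegenerate_sides x y z \<longleftrightarrow> 0 < x \<and> 0 < y \<and> 0 < z \<and> 0 < heron x y z"

lemma heron_swap12: "heron y x z = heron x y z"
  and heron_swap23: "heron x z y = heron x y z"
  unfolding heron_def by algebra+

lemma nondegenerate_sides_swap12: "nondegenerate_sides y x z \<longleftrightarrow> nondegenerate_sides x y z"
  and nondegenerate_sides_swap23: "nondegenerate_sides x z y \<longleftrightarrow> nondegenerate_sides x y z"
  by (auto simp: nondegenerate_sides_def heron_swap12 heron_swap23)

lemma opp_angle_swap23: "opp_angle x z y = opp_angle x y z"
  unfolding opp_angle_def by (simp add: ac_simps)

lemma heron_law_of_cosines: "heron x y z = (2*y*z)^2 - (y^2 + z^2 - x^2)^2"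
  unfolding heron_def by algebra

lemma rat_poly3_heron: "rat_poly3 heron"
proof -
  have "rat_poly3 (\<lambda>x y z. 2*x^2*y^2 + 2*y^2*z^2 + 2*z^2*x^2 - x^4 - y^4 - z^4)"
    by (intro rat_poly3_intros) auto
  then show ?thesis unfolding heron_def[abs_def] .
qed

lemma opp_angle_cos_bound:
  assumes "0 < y" "0 < z" "0 < heron x y z"
  shows "\<bar>(y^2 + z^2 - x^2) / (2*y*z)\<bar> < 1"
proof -
  have "\<bar>y^2 + z^2 - x^2\<bar>^2 < (2*y*z)^2"
    using assms(3) heron_law_of_cosines[of x y z] by simp
  moreover have "0 \<le> 2*y*z"
    using assms(1,2) by simp
  ultimately have "\<bar>y^2 + z^2 - x^2\<bar> < 2*y*z"
    by (rule power2_less_imp_less)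
  then show ?thesis using assms(1,2) by (simp add: abs_divide)
qed

lemma opp_angle_pos:
  assumes "0 < y" "0 < z" "0 < heron x y z"
  shows "0 < opp_angle x y z"
proof -
  have "-1 < (y^2 + z^2 - x^2) / (2*y*z)" "(y^2 + z^2 - x^2) / (2*y*z) < 1"
    using opp_angle_cos_bound[OF assms] by linarith+
  then show ?thesis
    unfolding opp_angle_def using arccos_lt_bounded by blast
qed

lemma rcis_opp_angle:
  assumes "0 < y" "0 < z" "0 < heron x y z"
  shows "rcis (2*y*z) (opp_angle x y z) = Complex (y^2 + z^2 - x^2) (sqrt (heron x y z))"
proof -
  let ?u = "(y^2 + z^2 - x^2) / (2*y*z)"
  have bound: "\<bar>?u\<bar> \<le> 1" using opp_angle_cos_bound[OF assms] by simp
  have "1 - ?u^2 = heron x y z / (2*y*z)^2"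
    using assms(1,2) by (simp add: heron_law_of_cosines power_divide field_simps)
  then have "sin (opp_angle x y z) = sqrt (heron x y z) / (2*y*z)"
    unfolding opp_angle_def sin_arccos_abs[OF bound] using assms(1,2) by (simp add: real_sqrt_divide)
  moreover have "cos (opp_angle x y z) = ?u"
    unfolding opp_angle_def by (rule cos_arccos_abs[OF bound])
  ultimately show ?thesis
    using assms(1,2) by (simp add: rcis_def complex_eq_iff)
qed

definition heron_form :: "(real \<Rightarrow> real \<Rightarrow> real \<Rightarrow> complex) \<Rightarrow> bool" where
  "heron_form F \<longleftrightarrow> (\<exists>P Q. rat_poly3 P \<and> rat_poly3 Q \<and>
     (\<forall>x y z. nondegenerate_sides x y z \<longrightarrow>
        F x y z = Complex (P x y z) (sqrt (heron x y z) * Q x y z)))"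

lemma heron_formI:
  assumes "rat_poly3 P" "rat_poly3 Q"
    and "\<And>x y z. nondegenerate_sides x y z \<Longrightarrow>
      F x y z = Complex (P x y z) (sqrt (heron x y z) * Q x y z)"
  shows "heron_form F"
  using assms unfolding heron_form_def by blast

lemma heron_formE:
  assumes "heron_form F"
  obtains P Q where "rat_poly3 P" "rat_poly3 Q"
    "\<And>x y z. nondegenerate_sides x y z \<Longrightarrow>
      F x y z = Complex (P x y z) (sqrt (heron x y z) * Q x y z)"
  using assms unfolding heron_form_def by blast

lemma heron_form_one: "heron_form (\<lambda>x y z. 1)"
  by (rule heron_formI[of "\<lambda>x y z. 1" "\<lambda>x y z. 0"])
    (simp_all add: rat_poly3_const one_complex.ctr)

lemma heron_form_mult:
  assumes "heron_form F" "heron_form G"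
  shows "heron_form (\<lambda>x y z. F x y z * G x y z)"
proof -
  obtain P Q where F: "rat_poly3 P" "rat_poly3 Q"
    "\<And>x y z. nondegenerate_sides x y z \<Longrightarrow> F x y z = Complex (P x y z) (sqrt (heron x y z) * Q x y z)"
    using heron_formE[OF assms(1)] by blast
  obtain R S where G: "rat_poly3 R" "rat_poly3 S"
    "\<And>x y z. nondegenerate_sides x y z \<Longrightarrow> G x y z = Complex (R x y z) (sqrt (heron x y z) * S x y z)"
    using heron_formE[OF assms(2)] by blast
  show ?thesis
  proof (rule heron_formI)
    show "rat_poly3 (\<lambda>x y z. P x y z * R x y z - heron x y z * (Q x y z * S x y z))"
      "rat_poly3 (\<lambda>x y z. P x y z * S x y z + Q x y z * R x y z)"
      by (intro rat_poly3_intros F(1,2) G(1,2) rat_poly3_heron)+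
  next
    fix x y z assume xyz: "nondegenerate_sides x y z"
    then have "sqrt (heron x y z) ^ 2 = heron x y z"
      by (simp add: nondegenerate_sides_def)
    then show "F x y z * G x y z = Complex (P x y z * R x y z - heron x y z * (Q x y z * S x y z))
        (sqrt (heron x y z) * (P x y z * S x y z + Q x y z * R x y z))"
      using F(3)[OF xyz] G(3)[OF xyz] by (simp add: complex_eq_iff algebra_simps power2_eq_square)
  qed
qed

lemma heron_form_power: "heron_form F \<Longrightarrow> heron_form (\<lambda>x y z. F x y z ^ n)"
  by (induction n) (simp_all add: heron_form_one heron_form_mult)

lemma heron_form_cnj:
  assumes "heron_form F"
  shows "heron_form (\<lambda>x y z. cnj (F x y z))"
proof -
  obtain P Q where "rat_poly3 P" "rat_poly3 Q"
    "\<And>x y z. nondegenerate_sides x y z \<Longrightarrow> F x y z = Complex (P x y z) (sqrt (heron x y z) * Q x y z)"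
    using heron_formE[OF assms] by blast
  then show ?thesis
    by (intro heron_formI[of P "\<lambda>x y z. - Q x y z"] rat_poly3_minus) (simp_all add: complex_eq_iff)
qed

lemma heron_form_rcis_opp_angle:
  "heron_form (\<lambda>x y z. rcis (2*y*z) (opp_angle x y z))"
  "heron_form (\<lambda>x y z. rcis (2*x*z) (opp_angle y x z))"
  "heron_form (\<lambda>x y z. rcis (2*x*y) (opp_angle z x y))"
proof -
  show "heron_form (\<lambda>x y z. rcis (2*y*z) (opp_angle x y z))"
    by (rule heron_formI[of "\<lambda>x y z. y^2 + z^2 - x^2" "\<lambda>x y z. 1"])
      (auto intro!: rat_poly3_intros simp: nondegenerate_sides_def rcis_opp_angle)
  show "heron_form (\<lambda>x y z. rcis (2*x*z) (opp_angle y x z))"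
    by (rule heron_formI[of "\<lambda>x y z. x^2 + z^2 - y^2" "\<lambda>x y z. 1"])
      (auto intro!: rat_poly3_intros simp: nondegenerate_sides_def rcis_opp_angle heron_swap12)
  show "heron_form (\<lambda>x y z. rcis (2*x*y) (opp_angle z x y))"
    by (rule heron_formI[of "\<lambda>x y z. x^2 + y^2 - z^2" "\<lambda>x y z. 1"])
      (auto intro!: rat_poly3_intros simp: nondegenerate_sides_def rcis_opp_angle heron_swap12 heron_swap23)
qed

lemma heron_form_rcis_int_mult:
  assumes "heron_form (\<lambda>x y z. rcis (r x y z) (\<theta> x y z))"
  shows "heron_form (\<lambda>x y z. rcis (r x y z ^ nat \<bar>n\<bar>) (of_int n * \<theta> x y z))"
proof (cases "0 \<le> n")
  case True
  then have "rcis (r x y z ^ nat \<bar>n\<bar>) (of_int n * \<theta> x y z) = rcis (r x y z) (\<theta> x y z) ^ nat n"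
    for x y z by (simp add: DeMoivre2)
  then show ?thesis
    using heron_form_power[OF assms] by simp
next
  case False
  have "cnj (rcis (r x y z) (\<theta> x y z)) = rcis (r x y z) (- \<theta> x y z)" for x y z
    by (simp add: rcis_def cis_cnj)
  moreover have "of_int n = - real (nat (- n))"
    using False by simp
  ultimately have "rcis (r x y z ^ nat \<bar>n\<bar>) (of_int n * \<theta> x y z) = cnj (rcis (r x y z) (\<theta> x y z)) ^ nat (- n)"
    for x y z using False by (simp add: DeMoivre2)
  then show ?thesis
    using heron_form_power[OF heron_form_cnj[OF assms]] by simp
qed

definition angle_comb :: "int \<Rightarrow> int \<Rightarrow> int \<Rightarrow> real \<Rightarrow> real \<Rightarrow> real \<Rightarrow> real" where
  "angle_comb n1 n2 n3 x y z =
     of_int n1 * opp_angle x y z + of_int n2 * opp_angle y x z + of_int n3 * opp_angle z x y"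

definition side_weight :: "int \<Rightarrow> int \<Rightarrow> int \<Rightarrow> real \<Rightarrow> real \<Rightarrow> real \<Rightarrow> real" where
  "side_weight n1 n2 n3 x y z = (2*y*z) ^ nat \<bar>n1\<bar> * (2*x*z) ^ nat \<bar>n2\<bar> * (2*x*y) ^ nat \<bar>n3\<bar>"

lemma rat_poly3_side_weight: "rat_poly3 (side_weight n1 n2 n3)"
proof -
  have "rat_poly3 (\<lambda>x y z. (2*y*z) ^ nat \<bar>n1\<bar> * (2*x*z) ^ nat \<bar>n2\<bar> * (2*x*y) ^ nat \<bar>n3\<bar>)"
    by (intro rat_poly3_intros) auto
  then show ?thesis unfolding side_weight_def[abs_def] .
qed

lemma heron_form_angle_comb:
  "heron_form (\<lambda>x y z. rcis (side_weight n1 n2 n3 x y z) (angle_comb n1 n2 n3 x y z))"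
proof -
  have "heron_form (\<lambda>x y z. rcis ((2*y*z) ^ nat \<bar>n1\<bar>) (of_int n1 * opp_angle x y z) *
      rcis ((2*x*z) ^ nat \<bar>n2\<bar>) (of_int n2 * opp_angle y x z) *
      rcis ((2*x*y) ^ nat \<bar>n3\<bar>) (of_int n3 * opp_angle z x y))"
    by (intro heron_form_mult heron_form_rcis_int_mult heron_form_rcis_opp_angle)
  then show ?thesis
    unfolding side_weight_def angle_comb_def rcis_mult .
qed

lemma heron_form_eq_rat_poly3_at_generic:
  assumes "alg_indep3 X Y Z" "nondegenerate_sides X Y Z"
    and "heron_form F" "rat_poly3 G" "F X Y Z = of_real (G X Y Z)"
    and "nondegenerate_sides x y z"
  shows "F x y z = of_real (G x y z)"
proof -
  obtain P Q where PQ: "rat_poly3 P" "rat_poly3 Q"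
    "\<And>x y z. nondegenerate_sides x y z \<Longrightarrow> F x y z = Complex (P x y z) (sqrt (heron x y z) * Q x y z)"
    using heron_formE[OF assms(3)] by blast
  have "sqrt (heron X Y Z) \<noteq> 0"
    using assms(2) by (simp add: nondegenerate_sides_def)
  then have "P X Y Z - G X Y Z = 0" "Q X Y Z = 0"
    using assms(5) PQ(3)[OF assms(2)] by (simp_all add: complex_eq_iff)
  note roots = this
  have "P x y z - G x y z = 0"
    by (rule alg_indep3_rat_poly3_vanishes[OF assms(1) rat_poly3_diff[OF PQ(1) assms(4)] roots(1)])
  moreover have "Q x y z = 0"
    by (rule alg_indep3_rat_poly3_vanishes[OF assms(1) PQ(2) roots(2)])
  ultimately
  show ?thesis
    using PQ(3)[OF assms(6)] by (simp add: complex_eq_iff)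
qed

lemma cis_angle_comb_at_generic:
  assumes "alg_indep3 X Y Z" "nondegenerate_sides X Y Z" "angle_comb n1 n2 n3 X Y Z = 0"
    and "nondegenerate_sides x y z"
  shows "cis (angle_comb n1 n2 n3 x y z) = 1"
proof -
  have "rcis (side_weight n1 n2 n3 x y z) (angle_comb n1 n2 n3 x y z) = of_real (side_weight n1 n2 n3 x y z)"
    by (rule heron_form_eq_rat_poly3_at_generic[OF assms(1,2) heron_form_angle_comb
          rat_poly3_side_weight _ assms(4)]) (simp add: assms(3))
  moreover have "side_weight n1 n2 n3 x y z \<noteq> 0"
    using assms(4) by (simp add: side_weight_def nondegenerate_sides_def)
  ultimately show ?thesis
    by (simp add: rcis_def)
qed

lemma isosceles_opp_angles:
  assumes "0 < t" "t < pi/2"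
  shows "opp_angle (2 * cos t) 1 1 = pi - 2*t" "opp_angle 1 (2 * cos t) 1 = t"
    and "nondegenerate_sides (2 * cos t) 1 1"
proof -
  have "0 < cos t" using assms by (intro cos_gt_zero) auto
  moreover have "cos t < 1" using assms cos_monotone_0_pi[of 0 t] by simp
  ultimately have "(cos t)^2 < 1" by (simp add: power_less_one_iff)
  then show "nondegenerate_sides (2 * cos t) 1 1"
    using \<open>0 < cos t\<close> by (simp add: nondegenerate_sides_def heron_def eval_nat_numeral algebra_simps)
  have "((1::real)^2 + 1^2 - (2 * cos t)^2) / (2*1*1) = - cos (2*t)"
    by (simp add: cos_double_cos power_mult_distrib)
  then show "opp_angle (2 * cos t) 1 1 = pi - 2*t"
    unfolding opp_angle_def using assms by (simp add: arccos_minus arccos_cos)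
  have "((2 * cos t)^2 + 1^2 - 1^2) / (2 * (2 * cos t) * 1) = cos t"
    using \<open>0 < cos t\<close> by (simp add: power2_eq_square)
  then show "opp_angle 1 (2 * cos t) 1 = t"
    unfolding opp_angle_def using assms by (simp add: arccos_cos)
qed

lemma cis_affine_const_imp_slope_zero:
  fixes m :: int and k :: real
  assumes const: "\<And>t. 0 < t \<Longrightarrow> t < pi/2 \<Longrightarrow> cis (of_int m * t + k) = 1"
  shows "m = 0"
proof (rule ccontr)
  assume "m \<noteq> 0"
  define d where "d = pi / (4 * \<bar>of_int m\<bar>)"
  have "1 \<le> \<bar>real_of_int m\<bar>" using \<open>m \<noteq> 0\<close> by linarith
  then have "0 < d" "d \<le> pi/4" unfolding d_def by (auto simp: field_simps)
  have "cis (of_int m * (pi/8) + k) * cis (of_int m * d) = cis (of_int m * (pi/8 + d) + k)"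
    by (simp add: cis_mult algebra_simps)
  then have "cis (of_int m * d) = 1"
    using const[of "pi/8"] const[of "pi/8 + d"] \<open>0 < d\<close> \<open>d \<le> pi/4\<close> by simp
  moreover have "\<bar>of_int m * d\<bar> = pi/4"
    unfolding d_def using \<open>m \<noteq> 0\<close> by (simp add: abs_mult)
  then have "cos (of_int m * d) = sqrt 2 / 2"
    by (metis abs_real_def cos_45 cos_minus)
  ultimately have "sqrt 2 = 2"
    by (metis cis.sel(1) one_complex.sel(1) divide_eq_1_iff)
  then have "(sqrt 2)^2 = (2::real)^2" by simp
  then show False by simp
qed

lemma angle_comb_swap12: "angle_comb n2 n1 n3 x y z = angle_comb n1 n2 n3 y x z"
  and angle_comb_rotate: "angle_comb n3 n1 n2 x y z = angle_comb n1 n2 n3 y z x"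
  unfolding angle_comb_def by (simp_all add: opp_angle_swap23 algebra_simps)

lemma angle_comb_isosceles_balance:
  assumes "\<And>x y z. nondegenerate_sides x y z \<Longrightarrow> cis (angle_comb n1 n2 n3 x y z) = 1"
  shows "n2 + n3 = 2 * n1"
proof -
  have "n2 + n3 - 2 * n1 = 0"
  proof (rule cis_affine_const_imp_slope_zero[where k = "of_int n1 * pi"])
    fix t :: real assume t: "0 < t" "t < pi/2"
    have "angle_comb n1 n2 n3 (2 * cos t) 1 1 = of_int (n2 + n3 - 2 * n1) * t + of_int n1 * pi"
      unfolding angle_comb_def isosceles_opp_angles[OF t] opp_angle_swap23[of 1 "2 * cos t" 1]
      by (simp add: algebra_simps)
    then show "cis (of_int (n2 + n3 - 2 * n1) * t + of_int n1 * pi) = 1"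
      using assms isosceles_opp_angles(3)[OF t] by metis
  qed
  then show ?thesis by simp
qed

lemma angle_comb_generic_eq_0:
  assumes "alg_indep3 X Y Z" "nondegenerate_sides X Y Z" "angle_comb n1 n2 n3 X Y Z = 0"
  shows "n1 = 0 \<and> n2 = 0 \<and> n3 = 0"
proof -
  have cis_comb: "cis (angle_comb n1 n2 n3 x y z) = 1" if "nondegenerate_sides x y z" for x y z
    using cis_angle_comb_at_generic[OF assms that] .
  have "n2 + n3 = 2 * n1"
    by (rule angle_comb_isosceles_balance) (rule cis_comb)
  moreover have "n1 + n3 = 2 * n2"
    by (rule angle_comb_isosceles_balance)
      (simp add: angle_comb_swap12 cis_comb nondegenerate_sides_swap12)
  moreover have "n1 + n2 = 2 * n3"
    by (rule angle_comb_isosceles_balance)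
      (simp add: angle_comb_rotate cis_comb nondegenerate_sides_swap12 nondegenerate_sides_swap23)
  ultimately have "n2 = n1" "n3 = n1" by linarith+
  moreover have "0 < opp_angle X Y Z + opp_angle Y X Z + opp_angle Z X Y"
    using assms(2) opp_angle_pos[of Y Z X] opp_angle_pos[of X Z Y] opp_angle_pos[of X Y Z]
    by (simp add: nondegenerate_sides_def heron_swap12 heron_swap23)
  ultimately show ?thesis
    using assms(3) unfolding angle_comb_def by (simp flip: distrib_left)
qed

lemma inner_diff_law_of_cosines:
  fixes P Q R :: "'a::real_inner"
  shows "2 * ((Q - P) \<bullet> (R - P)) = norm (Q - P)^2 + norm (R - P)^2 - norm (Q - R)^2"
proof -
  have "norm (Q - R)^2 = norm ((Q - P) - (R - P))^2" by simp
  also have "\<dots> = norm (Q - P)^2 + norm (R - P)^2 - 2 * ((Q - P) \<bullet> (R - P))"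
    by (simp only: power2_norm_eq_inner inner_diff_left inner_diff_right inner_commute) simp
  finally show ?thesis by simp
qed

lemma heron_dist_nonneg:
  fixes P Q R :: "'a::real_inner"
  shows "0 \<le> heron (dist Q R) (dist P Q) (dist P R)"
proof -
  have "\<bar>(Q - P) \<bullet> (R - P)\<bar>^2 \<le> (norm (Q - P) * norm (R - P))^2"
    by (intro power_mono Cauchy_Schwarz_ineq2) simp
  then have "(2 * ((Q - P) \<bullet> (R - P)))^2 \<le> (2 * dist P Q * dist P R)^2"
    by (simp add: power_mult_distrib dist_norm norm_minus_commute)
  then have "(dist P Q ^ 2 + dist P R ^ 2 - dist Q R ^ 2)^2 \<le> (2 * dist P Q * dist P R)^2"
    unfolding inner_diff_law_of_cosines by (simp add: dist_norm norm_minus_commute)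
  then show ?thesis
    by (simp add: heron_law_of_cosines)
qed

lemma opp_angle_scale:
  assumes "0 < k"
  shows "opp_angle (k*x) (k*y) (k*z) = opp_angle x y z"
proof -
  have "(k*y)^2 + (k*z)^2 - (k*x)^2 = k^2 * (y^2 + z^2 - x^2)" "2*(k*y)*(k*z) = k^2 * (2*y*z)"
    by (simp_all add: power2_eq_square algebra_simps)
  with assms show ?thesis
    unfolding opp_angle_def by (simp only:) simp
qed

lemma heron_scale: "heron (k*x) (k*y) (k*z) = k^4 * heron x y z"
  unfolding heron_def by (simp add: power_mult_distrib algebra_simps)

lemma vertex_angle_eq_opp_angle:
  assumes "0 < k"
  shows "vertex_angle P Q R = opp_angle (k * dist Q R) (k * dist P Q) (k * dist P R)"
proof -
  have "(Q - P) \<bullet> (R - P) / (norm (Q - P) * norm (R - P))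
      = 2 * ((Q - P) \<bullet> (R - P)) / (2 * norm (Q - P) * norm (R - P))"
    by simp
  then have "vertex_angle P Q R = opp_angle (dist Q R) (dist P Q) (dist P R)"
    unfolding vertex_angle_def opp_angle_def inner_diff_law_of_cosines
    by (simp add: dist_norm norm_minus_commute ac_simps)
  then show ?thesis
    by (simp add: opp_angle_scale[OF assms])
qed

lemma alg_indep3_rat_poly3_nonzero:
  assumes "alg_indep3 a b c" "rat_poly3 f" "f u v w \<noteq> 0"
  shows "f a b c \<noteq> 0"
  using alg_indep3_rat_poly3_vanishes[OF assms(1,2)] assms(3) by blast

lemma nondegenerate_sides_if_alg_indep3:
  assumes "alg_indep3 x y z" "0 \<le> x" "0 \<le> y" "0 \<le> z" "0 \<le> heron x y z"
  shows "nondegenerate_sides x y z"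
proof -
  have "x \<noteq> 0" "y \<noteq> 0" "z \<noteq> 0" "heron x y z \<noteq> 0"
    using alg_indep3_rat_poly3_nonzero[OF assms(1), of _ 1 1 1]
      rat_poly3_var1 rat_poly3_var2 rat_poly3_var3 rat_poly3_heron
    by (fastforce simp: heron_def)+
  then show ?thesis
    using assms(2-5) by (simp add: nondegenerate_sides_def)
qed

lemma lin_indep3_Q_if_int_indep:
  assumes "\<And>n1 n2 n3 :: int. of_int n1 * x + of_int n2 * y + of_int n3 * z = 0 \<Longrightarrow>
    n1 = 0 \<and> n2 = 0 \<and> n3 = 0"
  shows "lin_indep3_Q x y z"
  unfolding lin_indep3_Q_def
proof (intro allI impI)
  fix a b c :: rat
  assume rel: "of_rat a * x + of_rat b * y + of_rat c * z = 0"
  obtain pa qa pb qb pc qc where q: "quotient_of a = (pa, qa)" "quotient_of b = (pb, qb)"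
    "quotient_of c = (pc, qc)"
    by (metis surj_pair)
  have pos: "0 < qa" "0 < qb" "0 < qc"
    using q quotient_of_denom_pos by blast+
  have frac: "of_rat a = (of_int pa / of_int qa :: real)" "of_rat b = (of_int pb / of_int qb :: real)"
    "of_rat c = (of_int pc / of_int qc :: real)"
    by (simp_all add: quotient_of_div[OF q(1)] quotient_of_div[OF q(2)] quotient_of_div[OF q(3)]
        of_rat_divide)
  have "of_int (pa * qb * qc) * x + of_int (pb * qa * qc) * y + of_int (pc * qa * qb) * z
      = of_int (qa * qb * qc) * (of_rat a * x + of_rat b * y + of_rat c * z)"
    using pos unfolding frac by (simp add: field_simps)
  then have "pa * qb * qc = 0 \<and> pb * qa * qc = 0 \<and> pc * qa * qb = 0"
    using rel by (intro assms) simp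
  then show "a = 0 \<and> b = 0 \<and> c = 0"
    using frac pos by simp
qed

theorem proposition2p5:
  fixes A1 A2 A3 :: "real^2"
  assumes "\<not> collinear {A1, A2, A3}"
    and "generic_triangle A1 A2 A3"
  shows "typical_triangle A1 A2 A3"
proof -
  obtain k where "0 < k" and indep: "alg_indep3 (k * dist A2 A3) (k * dist A1 A3) (k * dist A1 A2)"
    using assms(2) unfolding generic_triangle_def by blast
  define X Y Z where "X = k * dist A2 A3" and "Y = k * dist A1 A3" and "Z = k * dist A1 A2"
  have "0 \<le> heron X Y Z"
    using heron_dist_nonneg[of A3 A2 A1] unfolding X_def Y_def Z_def heron_scale
    by (simp add: dist_commute heron_swap23)
  then have nondeg: "nondegenerate_sides X Y Z"
    using indep \<open>0 < k\<close> unfolding X_def Y_def Z_def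
    by (intro nondegenerate_sides_if_alg_indep3) simp_all
  have angles: "vertex_angle A1 A2 A3 = opp_angle X Y Z" "vertex_angle A2 A1 A3 = opp_angle Y X Z"
    "vertex_angle A3 A1 A2 = opp_angle Z X Y"
    unfolding X_def Y_def Z_def vertex_angle_eq_opp_angle[OF \<open>0 < k\<close>]
    by (simp_all add: dist_commute opp_angle_swap23)
  show ?thesis
    unfolding typical_triangle_def angles
    using angle_comb_generic_eq_0[OF indep[folded X_def Y_def Z_def] nondeg]
    by (intro lin_indep3_Q_if_int_indep) (simp add: angle_comb_def)
qed

end
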